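(* Let $\Gamma$ be a group that is nilpotent of class $\le n$, let $S\subseteq\Gamma\setminus\{\mathbb{I}\}$ be a generating set, $G:=\mathrm{Cay}(\Gamma,S)$, and let $r\ge\max\{2^{n+2},10\}$ be an integer. Let $h\in S$ be an involution such that $\{\mathbb{I},h\}$ is an $r$-local $2$-separator of $G$, and suppose that $G$ has no $r$-local cutvertex. Then every element of $S$ that traverses $\{\mathbb{I},h\}$ antisymmetrically also traverses $\{\mathbb{I},h\}$ symmetrically.
   Context: Generating sets are closed under inverses; $\mathrm{Cay}(\Gamma,S)$ is the simple graph on $\Gamma$ with edges $\{g,gs\}$. $a\equiv b$ means $a=b$ or $a=b^{-1}$; $\Gamma$ is nilpotent of class $\le n$ if $[g,h]_n=\mathbb{I}$ for all $g\not\equiv h$, where $[g,h]_1=gh^{-1}g^{-1}h$ and $[g,h]_n$ is the reduced form of $g[g,h]_{n-1}^{-1}g^{-1}[g,h]_{n-1}$. Ball $B_r(v)$: subgraph of all vertices and edges on closed walks of length $\le r$ through $v$; $v$ is an $r$-local cutvertex if $B_r(v)-v$ is disconnected. For $X=\{v_0,v_1\}$, $N(X)$ is the set of vertices outside $X$ adjacent to $X$; the connectivity graph $C_r(v_0,v_1)$ has vertex set $N(X)$, $a,b$ adjacent if for some $i$ they lie in the same component of $B_r(v_i)-v_0-v_1$; $X$ is an $r$-local $2$-separator if $C_r(v_0,v_1)$ is disconnected and $d_G(v_0,v_1)\le r/2$; the $r$-local components at $X$ are the components of $C_r(v_0,v_1)$. An element $g\in S$ traverses $X$ if for some $x\in X$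 the vertices $xg^{-1}$ and $xg$ lie in distinct $r$-local components at $X$. When $h$ is an involution and $g$ traverses $\{\mathbb{I},h\}$, $g$ traverses it symmetrically if $g^{-1}$ and $hg$ lie in distinct $r$-local components at $\{\mathbb{I},h\}$, and antisymmetrically if $g^{-1}$ and $hg^{-1}$ lie in distinct $r$-local components at $\{\mathbb{I},h\}$. *)

theory Defs
  imports "HOL-Algebra.Algebra"
begin

primrec iter_comm :: "('a, 'b) monoid_scheme \<Rightarrow> 'a \<Rightarrow> 'a \<Rightarrow> nat \<Rightarrow> 'a" where
  "iter_comm G g h 0 = h"
| "iter_comm G g h (Suc k) =
     g \<otimes>\<^bsub>G\<^esub> inv\<^bsub>G\<^esub> (iter_comm G g h k) \<otimes>\<^bsub>G\<^esub> inv\<^bsub>G\<^esub> g \<otimes>\<^bsub>G\<^esub> iter_comm G g h k"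

definition nilpotent_class_le :: "('a, 'b) monoid_scheme \<Rightarrow> nat \<Rightarrow> bool" where
  "nilpotent_class_le G n \<longleftrightarrow>
     (\<forall>g\<in>carrier G. \<forall>h\<in>carrier G. (g \<noteq> h \<and> g \<noteq> inv\<^bsub>G\<^esub> h) \<longrightarrow> iter_comm G g h n = \<one>\<^bsub>G\<^esub>)"

definition cay :: "('a, 'b) monoid_scheme \<Rightarrow> 'a set \<Rightarrow> 'a \<Rightarrow> 'a \<Rightarrow> bool" where
  "cay G S x y \<longleftrightarrow> x \<in> carrier G \<and> (\<exists>s\<in>S. y = x \<otimes>\<^bsub>G\<^esub> s)"

text \<open>A walk is a nonempty vertex list with consecutive vertices adjacent;
  its length is (number of vertices - 1).\<close>
definition is_walk :: "('a \<Rightarrow> 'a \<Rightarrow> bool) \<Rightarrow> 'a list \<Rightarrow> bool" where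
  "is_walk E ws \<longleftrightarrow> ws \<noteq> [] \<and> (\<forall>i. Suc i < length ws \<longrightarrow> E (ws ! i) (ws ! Suc i))"

definition closed_walk_at :: "('a \<Rightarrow> 'a \<Rightarrow> bool) \<Rightarrow> nat \<Rightarrow> 'a \<Rightarrow> 'a list \<Rightarrow> bool" where
  "closed_walk_at E r v ws \<longleftrightarrow> is_walk E ws \<and> hd ws = v \<and> last ws = v \<and> length ws \<le> Suc r"

definition ball_V :: "('a \<Rightarrow> 'a \<Rightarrow> bool) \<Rightarrow> nat \<Rightarrow> 'a \<Rightarrow> 'a set" where
  "ball_V E r v = {u. \<exists>ws. closed_walk_at E r v ws \<and> u \<in> set ws}"

definition ball_E :: "('a \<Rightarrow> 'a \<Rightarrow> bool) \<Rightarrow> nat \<Rightarrow> 'a \<Rightarrow> 'a \<Rightarrow> 'a \<Rightarrow> bool" where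
  "ball_E E r v a b \<longleftrightarrow> (\<exists>ws i. closed_walk_at E r v ws \<and> Suc i < length ws \<and>
      ((ws ! i = a \<and> ws ! Suc i = b) \<or> (ws ! i = b \<and> ws ! Suc i = a)))"

definition conn_in :: "'a set \<Rightarrow> ('a \<Rightarrow> 'a \<Rightarrow> bool) \<Rightarrow> 'a \<Rightarrow> 'a \<Rightarrow> bool" where
  "conn_in V F a b \<longleftrightarrow> a \<in> V \<and> b \<in> V \<and> (\<lambda>x y. x \<in> V \<and> y \<in> V \<and> F x y)\<^sup>*\<^sup>* a b"

definition local_cutvertex :: "('a \<Rightarrow> 'a \<Rightarrow> bool) \<Rightarrow> nat \<Rightarrow> 'a \<Rightarrow> bool" where
  "local_cutvertex E r v \<longleftrightarrow>
     (\<exists>a b. a \<in> ball_V E r v - {v} \<and> b \<in> ball_V E r v - {v} \<and>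
            \<not> conn_in (ball_V E r v - {v}) (ball_E E r v) a b)"

definition nbhd :: "('a \<Rightarrow> 'a \<Rightarrow> bool) \<Rightarrow> 'a set \<Rightarrow> 'a set" where
  "nbhd E Z = {u. u \<notin> Z \<and> (\<exists>z\<in>Z. E z u)}"

definition conn_graph_adj :: "('a \<Rightarrow> 'a \<Rightarrow> bool) \<Rightarrow> nat \<Rightarrow> 'a \<Rightarrow> 'a \<Rightarrow> 'a \<Rightarrow> 'a \<Rightarrow> bool" where
  "conn_graph_adj E r v0 v1 a b \<longleftrightarrow>
     a \<in> nbhd E {v0, v1} \<and> b \<in> nbhd E {v0, v1} \<and>
     (\<exists>v\<in>{v0, v1}. conn_in (ball_V E r v - {v0, v1}) (ball_E E r v) a b)"

definition same_local_comp :: "('a \<Rightarrow> 'a \<Rightarrow> bool) \<Rightarrow> nat \<Rightarrow> 'a \<Rightarrow> 'a \<Rightarrow> 'a \<Rightarrow> 'a \<Rightarrow> bool" where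
  "same_local_comp E r v0 v1 a b \<longleftrightarrow>
     a \<in> nbhd E {v0, v1} \<and> b \<in> nbhd E {v0, v1} \<and> (conn_graph_adj E r v0 v1)\<^sup>*\<^sup>* a b"

definition distinct_local_comps :: "('a \<Rightarrow> 'a \<Rightarrow> bool) \<Rightarrow> nat \<Rightarrow> 'a \<Rightarrow> 'a \<Rightarrow> 'a \<Rightarrow> 'a \<Rightarrow> bool" where
  "distinct_local_comps E r v0 v1 a b \<longleftrightarrow>
     a \<in> nbhd E {v0, v1} \<and> b \<in> nbhd E {v0, v1} \<and> \<not> same_local_comp E r v0 v1 a b"

definition dist_le :: "('a \<Rightarrow> 'a \<Rightarrow> bool) \<Rightarrow> 'a \<Rightarrow> 'a \<Rightarrow> nat \<Rightarrow> bool" where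
  "dist_le E a b k \<longleftrightarrow> (\<exists>ws. is_walk E ws \<and> hd ws = a \<and> last ws = b \<and> length ws \<le> Suc k)"

definition local_2_separator :: "('a \<Rightarrow> 'a \<Rightarrow> bool) \<Rightarrow> nat \<Rightarrow> 'a \<Rightarrow> 'a \<Rightarrow> bool" where
  "local_2_separator E r v0 v1 \<longleftrightarrow>
     v0 \<noteq> v1 \<and>
     (\<exists>a b. distinct_local_comps E r v0 v1 a b) \<and>
     (\<exists>k. 2 * k \<le> r \<and> dist_le E v0 v1 k)"

definition traverses :: "('a, 'b) monoid_scheme \<Rightarrow> 'a set \<Rightarrow> nat \<Rightarrow> 'a \<Rightarrow> 'a \<Rightarrow> 'a \<Rightarrow> bool" where
  "traverses G S r x0 x1 g \<longleftrightarrow>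
     (\<exists>x\<in>{x0, x1}. distinct_local_comps (cay G S) r x0 x1
                      (x \<otimes>\<^bsub>G\<^esub> inv\<^bsub>G\<^esub> g) (x \<otimes>\<^bsub>G\<^esub> g))"

definition traverses_sym :: "('a, 'b) monoid_scheme \<Rightarrow> 'a set \<Rightarrow> nat \<Rightarrow> 'a \<Rightarrow> 'a \<Rightarrow> bool" where
  "traverses_sym G S r h g \<longleftrightarrow>
     traverses G S r \<one>\<^bsub>G\<^esub> h g \<and>
     distinct_local_comps (cay G S) r \<one>\<^bsub>G\<^esub> h (inv\<^bsub>G\<^esub> g) (h \<otimes>\<^bsub>G\<^esub> g)"

definition traverses_antisym :: "('a, 'b) monoid_scheme \<Rightarrow> 'a set \<Rightarrow> nat \<Rightarrow> 'a \<Rightarrow> 'a \<Rightarrow> bool" where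
  "traverses_antisym G S r h g \<longleftrightarrow>
     traverses G S r \<one>\<^bsub>G\<^esub> h g \<and>
     distinct_local_comps (cay G S) r \<one>\<^bsub>G\<^esub> h (inv\<^bsub>G\<^esub> g) (h \<otimes>\<^bsub>G\<^esub> inv\<^bsub>G\<^esub> g)"

end

theory Submission
  imports Defs
begin

text \<open>Nilpotency gives a last non-trivial iterated commutator \<open>d = [h,g]\<^sub>j\<close>; since
  \<open>[h,g]\<^sub>j\<^sub>+\<^sub>1 = h d\<^sup>-\<^sup>1 h d = \<one>\<close>, it commutes with \<open>h\<close>, and \<open>d \<notin> {\<one>, h}\<close>.  Unfolding the
  recursion of the iterated commutator gives a walk \<open>P\<close> from \<open>\<one>\<close> to \<open>d\<close> with steps
  \<open>g, g\<^sup>-\<^sup>1, h\<close> and fewer than \<open>2\<^sup>j\<^sup>+\<^sup>2\<close> vertices.  Followed by its reversed \<open>h\<close>-translate,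
  \<open>P\<close> closes up to a walk \<open>\<one> \<rightarrow> d \<rightarrow> hd = dh \<rightarrow> h \<rightarrow> \<one>\<close> of length at most \<open>r\<close>.
  Let \<open>u\<close> be the vertex after the last visit of \<open>P\<close> to \<open>{\<one>, h}\<close>; then
  \<open>u \<in> {g, g\<^sup>-\<^sup>1, hg, hg\<^sup>-\<^sup>1}\<close>, and the stretch of the closed walk from \<open>u\<close> to \<open>hu\<close> avoids
  \<open>{\<one>, h}\<close>, so \<open>u\<close> and \<open>hu\<close> lie in the same \<open>r\<close>-local component.  Antisymmetric traversal
  excludes this for the pair \<open>g\<^sup>-\<^sup>1, hg\<^sup>-\<^sup>1\<close>, so it holds for \<open>g, hg\<close>.  Left multiplication by
  \<open>h\<close> preserves the local components at \<open>{\<one>, h}\<close>; thus if \<open>g\<^sup>-\<^sup>1\<close> were in the component of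
  \<open>hg\<close>, both \<open>g\<^sup>-\<^sup>1, g\<close> and \<open>hg\<^sup>-\<^sup>1, hg\<close> would be, and \<open>g\<close> would not traverse \<open>{\<one>, h}\<close>.\<close>

lemma rtranclp_map:
  assumes "R\<^sup>*\<^sup>* a b" and "\<And>x y. R x y \<Longrightarrow> R' (f x) (f y)"
  shows "R'\<^sup>*\<^sup>* (f a) (f b)"
  using assms(1) by (induction rule: rtranclp_induct) (auto intro: rtranclp.rtrancl_into_rtrancl assms(2))

lemma rtranclp_hd_last_if_successively:
  assumes "successively R xs" and "xs \<noteq> []"
  shows "R\<^sup>*\<^sup>* (hd xs) (last xs)"
  using assms by (induction xs rule: induct_list012) (auto intro: converse_rtranclp_into_rtranclp)

lemma ex_last_index_before:
  assumes "f 0 \<noteq> c" and "f n = c"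
  shows "\<exists>j<n. f j \<noteq> c \<and> f (Suc j) = c"
  using assms by (induction n) (auto, metis less_Suc_eq)

lemma split_at_last_visit:
  assumes "xs \<noteq> []" and "hd xs \<in> Y" and "last xs \<notin> Y"
  shows "\<exists>ys zs. xs = ys @ zs \<and> ys \<noteq> [] \<and> last ys \<in> Y \<and> zs \<noteq> [] \<and> set zs \<inter> Y = {}"
  using assms
proof (induction xs rule: rev_induct)
  case (snoc x xs)
  show ?case
  proof (cases "xs \<noteq> [] \<and> last xs \<notin> Y")
    case True
    then have "hd xs \<in> Y"
      using snoc.prems(2) by (simp add: hd_append)
    then obtain ys zs where "xs = ys @ zs" "ys \<noteq> []" "last ys \<in> Y" "zs \<noteq> []" "set zs \<inter> Y = {}"
      using snoc.IH True by blast
    then show ?thesis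
      using snoc.prems(3) by (intro exI[of _ ys] exI[of _ "zs @ [x]"]) simp
  next
    case False
    moreover have "xs \<noteq> []"
      using snoc.prems(2,3) by auto
    ultimately show ?thesis
      using snoc.prems(3) by (intro exI[of _ xs] exI[of _ "[x]"]) simp
  qed
qed simp

subsection \<open>Walks\<close>

lemma is_walk_iff_successively: "is_walk E ws \<longleftrightarrow> ws \<noteq> [] \<and> successively E ws"
  unfolding is_walk_def successively_conv_nth by blast

lemma is_walk_singleton: "is_walk E [x]"
  by (simp add: is_walk_def)

lemma is_walk_append:
  assumes "is_walk E xs" and "is_walk E ys" and "E (last xs) (hd ys)"
  shows "is_walk E (xs @ ys)"
  using assms by (simp add: is_walk_iff_successively successively_append_iff)

lemma is_walk_appendD:
  assumes "is_walk E (xs @ ys)" and "xs \<noteq> []" and "ys \<noteq> []"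
  shows "E (last xs) (hd ys)"
  using assms by (simp add: is_walk_iff_successively successively_append_iff)

lemma is_walk_map:
  assumes "is_walk E ws" and "\<And>x y. E x y \<Longrightarrow> E' (f x) (f y)"
  shows "is_walk E' (map f ws)"
proof -
  have "successively E ws" and "ws \<noteq> []"
    using assms(1) by (simp_all add: is_walk_iff_successively)
  have "successively (\<lambda>x y. E' (f x) (f y)) ws"
    using \<open>successively E ws\<close> by (rule successively_mono) (rule assms(2))
  then show ?thesis
    unfolding is_walk_iff_successively successively_map using \<open>ws \<noteq> []\<close> by simp
qed

lemma is_walk_mono:
  assumes "is_walk E ws" and "\<And>x y. E x y \<Longrightarrow> E' x y"
  shows "is_walk E' ws"
  using assms unfolding is_walk_def by blast

lemma is_walk_rev:
  assumes "symp E" and "is_walk E ws"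
  shows "is_walk E (rev ws)"
  using assms by (auto simp: is_walk_iff_successively intro: successively_mono dest: sympD)

subsection \<open>Local components\<close>

lemma conn_in_hd_last_if_successively:
  assumes "successively F W" and "W \<noteq> []" and "set W \<subseteq> V"
  shows "conn_in V F (hd W) (last W)"
proof -
  have "successively (\<lambda>x y. x \<in> V \<and> y \<in> V \<and> F x y) W"
    using assms(1) by (rule successively_mono) (use assms(3) in blast)
  then show ?thesis
    unfolding conn_in_def using assms(2,3) rtranclp_hd_last_if_successively by auto
qed

lemma conn_in_sym:
  assumes "symp F" and "conn_in V F a b"
  shows "conn_in V F b a"
proof -
  let ?F = "\<lambda>x y. x \<in> V \<and> y \<in> V \<and> F x y"
  have "symp ?F"
    using assms(1) unfolding symp_def by blast
  then have "symp ?F\<^sup>*\<^sup>*"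
    by (rule symp_rtranclp)
  moreover have "?F\<^sup>*\<^sup>* a b"
    using assms(2) unfolding conn_in_def by blast
  ultimately have "?F\<^sup>*\<^sup>* b a"
    by (rule sympD)
  then show ?thesis
    using assms(2) unfolding conn_in_def by blast
qed

lemma symp_ball_E: "symp (ball_E E r v)"
  unfolding ball_E_def by (rule sympI) blast

lemma conn_graph_adjE:
  assumes "conn_graph_adj E r v0 v1 a b"
  obtains v where "a \<in> nbhd E {v0, v1}" and "b \<in> nbhd E {v0, v1}" and "v \<in> {v0, v1}"
    and "conn_in (ball_V E r v - {v0, v1}) (ball_E E r v) a b"
  using assms unfolding conn_graph_adj_def by blast

lemma symp_conn_graph_adj: "symp (conn_graph_adj E r v0 v1)"
proof (rule sympI)
  fix a b
  assume "conn_graph_adj E r v0 v1 a b"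
  then obtain v where ab: "a \<in> nbhd E {v0, v1}" "b \<in> nbhd E {v0, v1}" and v: "v \<in> {v0, v1}"
    and conn: "conn_in (ball_V E r v - {v0, v1}) (ball_E E r v) a b"
    by (rule conn_graph_adjE)
  have "conn_in (ball_V E r v - {v0, v1}) (ball_E E r v) b a"
    using conn by (rule conn_in_sym[OF symp_ball_E])
  then show "conn_graph_adj E r v0 v1 b a"
    unfolding conn_graph_adj_def using ab v by blast
qed

lemma same_local_comp_sym:
  assumes "same_local_comp E r v0 v1 a b"
  shows "same_local_comp E r v0 v1 b a"
proof -
  have "(conn_graph_adj E r v0 v1)\<^sup>*\<^sup>* a b"
    using assms unfolding same_local_comp_def by blast
  then have "(conn_graph_adj E r v0 v1)\<^sup>*\<^sup>* b a"
    by (rule sympD[OF symp_rtranclp[OF symp_conn_graph_adj]])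
  then show ?thesis
    using assms unfolding same_local_comp_def by blast
qed

lemma same_local_comp_trans:
  "same_local_comp E r v0 v1 a b \<Longrightarrow> same_local_comp E r v0 v1 b c \<Longrightarrow>
     same_local_comp E r v0 v1 a c"
  unfolding same_local_comp_def by auto

lemma same_local_comp_if_conn_in_ball:
  assumes "a \<in> nbhd E {v0, v1}" and "b \<in> nbhd E {v0, v1}" and "v \<in> {v0, v1}"
    and "conn_in (ball_V E r v - {v0, v1}) (ball_E E r v) a b"
  shows "same_local_comp E r v0 v1 a b"
proof -
  have "conn_graph_adj E r v0 v1 a b"
    unfolding conn_graph_adj_def using assms by blast
  then show ?thesis
    unfolding same_local_comp_def using assms(1,2) by blast
qed

lemma conn_in_ball_if_infix_of_closed_walk:
  assumes "closed_walk_at E r v (A @ W @ B)" and "W \<noteq> []" and "set W \<inter> Z = {}"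
  shows "conn_in (ball_V E r v - Z) (ball_E E r v) (hd W) (last W)"
proof (rule conn_in_hd_last_if_successively)
  have "successively (ball_E E r v) (A @ W @ B)"
    using assms(1) unfolding successively_conv_nth ball_E_def by blast
  then show "successively (ball_E E r v) W"
    by (simp add: successively_append_iff)
  have "set W \<subseteq> ball_V E r v"
    using assms(1) unfolding ball_V_def by auto
  then show "set W \<subseteq> ball_V E r v - Z"
    using assms(3) by blast
qed (rule assms(2))

subsection \<open>Cayley graphs\<close>

lemma cay_mono: "S \<subseteq> T \<Longrightarrow> cay G S x y \<Longrightarrow> cay G T x y"
  unfolding cay_def by blast

context group
begin

lemma cay_closed:
  assumes "S \<subseteq> carrier G" and "cay G S x y"
  shows "x \<in> carrier G" and "y \<in> carrier G"
  using assms unfolding cay_def by auto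

lemma cay_mult_left:
  assumes "S \<subseteq> carrier G" and "a \<in> carrier G" and "cay G S x y"
  shows "cay G S (a \<otimes> x) (a \<otimes> y)"
  using assms unfolding cay_def by (auto simp: m_assoc subset_iff)

lemma symp_cay:
  assumes "S \<subseteq> carrier G" and "\<forall>s\<in>S. inv s \<in> S"
  shows "symp (cay G S)"
proof (rule sympI)
  fix x y
  assume "cay G S x y"
  then obtain s where "x \<in> carrier G" "s \<in> S" "y = x \<otimes> s"
    unfolding cay_def by blast
  moreover have "s \<in> carrier G"
    using \<open>s \<in> S\<close> assms(1) by blast
  ultimately have "y \<in> carrier G" and "x = y \<otimes> inv s"
    by (simp_all add: m_assoc)
  then show "cay G S y x"
    unfolding cay_def using assms(2) \<open>s \<in> S\<close> by blast
qed

lemma walk_in_carrier: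
  assumes "S \<subseteq> carrier G" and "is_walk (cay G S) ws" and "hd ws \<in> carrier G"
  shows "set ws \<subseteq> carrier G"
proof
  fix u
  assume "u \<in> set ws"
  then obtain i where i: "i < length ws" "u = ws ! i"
    by (auto simp: in_set_conv_nth)
  show "u \<in> carrier G"
  proof (cases i)
    case 0
    then show ?thesis
      using i assms(3) by (simp add: hd_conv_nth)
  next
    case (Suc j)
    then have "cay G S (ws ! j) u"
      using i assms(2) unfolding is_walk_def by blast
    then show ?thesis
      by (rule cay_closed(2)[OF assms(1)])
  qed
qed

lemma closed_walk_at_mult_left:
  assumes "S \<subseteq> carrier G" and "a \<in> carrier G" and "closed_walk_at (cay G S) r v ws"
  shows "closed_walk_at (cay G S) r (a \<otimes> v) (map ((\<otimes>) a) ws)"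
proof -
  have "is_walk (cay G S) (map ((\<otimes>) a) ws)"
    using assms(3) cay_mult_left[OF assms(1,2)] unfolding closed_walk_at_def by (blast intro: is_walk_map)
  moreover have "ws \<noteq> []"
    using assms(3) unfolding closed_walk_at_def is_walk_def by blast
  ultimately show ?thesis
    using assms(3) unfolding closed_walk_at_def by (simp add: hd_map last_map)
qed

lemma ball_V_mult_left:
  assumes "S \<subseteq> carrier G" and "a \<in> carrier G" and "u \<in> ball_V (cay G S) r v"
  shows "a \<otimes> u \<in> ball_V (cay G S) r (a \<otimes> v)"
proof -
  obtain ws where "closed_walk_at (cay G S) r v ws" and "u \<in> set ws"
    using assms(3) unfolding ball_V_def by blast
  then show ?thesis
    unfolding ball_V_def
    by (intro CollectI exI[of _ "map ((\<otimes>) a) ws"]) (simp add: closed_walk_at_mult_left[OF assms(1,2)])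
qed

lemma ball_E_mult_left:
  assumes "S \<subseteq> carrier G" and "a \<in> carrier G" and "ball_E (cay G S) r v x y"
  shows "ball_E (cay G S) r (a \<otimes> v) (a \<otimes> x) (a \<otimes> y)"
proof -
  obtain ws i where "closed_walk_at (cay G S) r v ws" "Suc i < length ws"
      "(ws ! i = x \<and> ws ! Suc i = y) \<or> (ws ! i = y \<and> ws ! Suc i = x)"
    using assms(3) unfolding ball_E_def by blast
  then show ?thesis
    unfolding ball_E_def
    by (intro exI[of _ "map ((\<otimes>) a) ws"] exI[of _ i]) (auto intro: closed_walk_at_mult_left[OF assms(1,2)])
qed

lemma ball_V_subset_carrier:
  assumes "S \<subseteq> carrier G" and "v \<in> carrier G"
  shows "ball_V (cay G S) r v \<subseteq> carrier G"
  using assms walk_in_carrier unfolding ball_V_def closed_walk_at_def by blast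

lemma conn_in_ball_mult_left:
  assumes "S \<subseteq> carrier G" and "a \<in> carrier G" and "v \<in> carrier G"
    and "\<And>x. x \<in> carrier G \<Longrightarrow> a \<otimes> x \<in> Z \<Longrightarrow> x \<in> Z"
    and "conn_in (ball_V (cay G S) r v - Z) (ball_E (cay G S) r v) x y"
  shows "conn_in (ball_V (cay G S) r (a \<otimes> v) - Z) (ball_E (cay G S) r (a \<otimes> v)) (a \<otimes> x) (a \<otimes> y)"
proof -
  let ?V = "ball_V (cay G S) r v - Z" and ?V' = "ball_V (cay G S) r (a \<otimes> v) - Z"
  have V: "a \<otimes> u \<in> ?V'" if "u \<in> ?V" for u
    using that ball_V_mult_left[OF assms(1,2)] ball_V_subset_carrier[OF assms(1,3)] assms(4) by blast
  have "(\<lambda>u w. u \<in> ?V \<and> w \<in> ?V \<and> ball_E (cay G S) r v u w)\<^sup>*\<^sup>* x y"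
    using assms(5) unfolding conn_in_def by blast
  then have "(\<lambda>u w. u \<in> ?V' \<and> w \<in> ?V' \<and> ball_E (cay G S) r (a \<otimes> v) u w)\<^sup>*\<^sup>* (a \<otimes> x) (a \<otimes> y)"
    by (rule rtranclp_map) (use V ball_E_mult_left[OF assms(1,2)] in blast)
  then show ?thesis
    using assms(5) V unfolding conn_in_def by blast
qed

lemma involution_mult_mem_iff:
  assumes "h \<in> carrier G" and "h \<otimes> h = \<one>" and "x \<in> carrier G"
  shows "h \<otimes> x \<in> {\<one>, h} \<longleftrightarrow> x \<in> {\<one>, h}"
proof -
  have "h \<otimes> x = h \<otimes> h \<longleftrightarrow> x = h"
    using assms(1,3) by simp
  then have "h \<otimes> x = \<one> \<longleftrightarrow> x = h"
    by (simp only: assms(2))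
  moreover have "h \<otimes> x = h \<longleftrightarrow> x = \<one>"
    using assms(1,3) by simp
  ultimately show ?thesis
    by blast
qed

lemma nbhd_mult_involution:
  assumes "S \<subseteq> carrier G" and "h \<in> carrier G" and "h \<otimes> h = \<one>"
    and "a \<in> nbhd (cay G S) {\<one>, h}"
  shows "h \<otimes> a \<in> nbhd (cay G S) {\<one>, h}"
proof -
  obtain z where z: "z \<in> {\<one>, h}" "cay G S z a" and a: "a \<notin> {\<one>, h}"
    using assms(4) unfolding nbhd_def by blast
  have "cay G S (h \<otimes> z) (h \<otimes> a)"
    using cay_mult_left[OF assms(1,2) z(2)] .
  moreover have "h \<otimes> z \<in> {\<one>, h}"
    using z(1) assms(2,3) involution_mult_mem_iff by blast
  moreover have "h \<otimes> a \<notin> {\<one>, h}"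
    using involution_mult_mem_iff[OF assms(2,3) cay_closed(2)[OF assms(1) z(2)]] a by blast
  ultimately show ?thesis
    unfolding nbhd_def by blast
qed

lemma same_local_comp_mult_involution:
  assumes "S \<subseteq> carrier G" and "h \<in> carrier G" and "h \<otimes> h = \<one>"
    and "same_local_comp (cay G S) r \<one> h a b"
  shows "same_local_comp (cay G S) r \<one> h (h \<otimes> a) (h \<otimes> b)"
proof -
  let ?E = "cay G S"
  have adj: "conn_graph_adj ?E r \<one> h (h \<otimes> x) (h \<otimes> y)"
    if xy: "conn_graph_adj ?E r \<one> h x y" for x y
  proof -
    obtain v where x: "x \<in> nbhd ?E {\<one>, h}" and y: "y \<in> nbhd ?E {\<one>, h}" and v: "v \<in> {\<one>, h}"
      and conn: "conn_in (ball_V ?E r v - {\<one>, h}) (ball_E ?E r v) x y"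
      using xy by (rule conn_graph_adjE)
    have "v \<in> carrier G"
      using v assms(2) by blast
    have "conn_in (ball_V ?E r (h \<otimes> v) - {\<one>, h}) (ball_E ?E r (h \<otimes> v)) (h \<otimes> x) (h \<otimes> y)"
    proof (rule conn_in_ball_mult_left[OF assms(1,2) \<open>v \<in> carrier G\<close> _ conn])
      show "u \<in> {\<one>, h}" if "u \<in> carrier G" and "h \<otimes> u \<in> {\<one>, h}" for u
        using that involution_mult_mem_iff[OF assms(2,3)] by blast
    qed
    moreover have "h \<otimes> v \<in> {\<one>, h}"
      using v involution_mult_mem_iff[OF assms(2,3) \<open>v \<in> carrier G\<close>] by blast
    moreover have "h \<otimes> x \<in> nbhd ?E {\<one>, h}" and "h \<otimes> y \<in> nbhd ?E {\<one>, h}"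
      using x y by (simp_all add: nbhd_mult_involution[OF assms(1-3)])
    ultimately show ?thesis
      unfolding conn_graph_adj_def by blast
  qed
  have "(conn_graph_adj ?E r \<one> h)\<^sup>*\<^sup>* a b"
    using assms(4) unfolding same_local_comp_def by blast
  then have "(conn_graph_adj ?E r \<one> h)\<^sup>*\<^sup>* (h \<otimes> a) (h \<otimes> b)"
    by (rule rtranclp_map) (rule adj)
  moreover have "h \<otimes> a \<in> nbhd ?E {\<one>, h}" and "h \<otimes> b \<in> nbhd ?E {\<one>, h}"
    using assms(4) unfolding same_local_comp_def by (simp_all add: nbhd_mult_involution[OF assms(1-3)])
  ultimately show ?thesis
    unfolding same_local_comp_def by blast
qed

subsection \<open>Iterated commutators\<close>

lemma iter_comm_closed:
  "h \<in> carrier G \<Longrightarrow> g \<in> carrier G \<Longrightarrow> iter_comm G h g k \<in> carrier G"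
  by (induction k) auto

lemma commute_if_commutator_eq_one:
  assumes "x \<in> carrier G" and "y \<in> carrier G" and "x \<otimes> inv y \<otimes> inv x \<otimes> y = \<one>"
  shows "x \<otimes> y = y \<otimes> x"
  using assms by (smt (verit, ccfv_SIG) inv_solve_left l_inv_ex inv_equality m_assoc m_closed)

lemma commute_if_iter_comm_Suc_eq_one:
  assumes "g \<in> carrier G" and "h \<in> carrier G" and "iter_comm G h g (Suc k) = \<one>"
  shows "h \<otimes> iter_comm G h g k = iter_comm G h g k \<otimes> h"
  using assms by (intro commute_if_commutator_eq_one) (simp_all add: iter_comm_closed)

lemma iter_comm_neq_self:
  assumes "g \<in> carrier G" and "h \<in> carrier G" and "h \<noteq> \<one>" and "g \<noteq> h"
  shows "iter_comm G h g k \<noteq> h"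
proof (cases k)
  case (Suc j)
  define c where "c = iter_comm G h g j"
  have c: "c \<in> carrier G"
    unfolding c_def using assms(2,1) by (rule iter_comm_closed)
  have "inv c \<otimes> inv h \<otimes> c \<noteq> \<one>"
  proof
    assume "inv c \<otimes> inv h \<otimes> c = \<one>"
    then have "inv h = \<one>"
      using c assms(2) inv_equality by fastforce
    then show False
      using assms(2,3) by simp
  qed
  then show ?thesis
    using c assms(2) by (simp add: Suc c_def[symmetric] m_assoc)
qed (use assms(4) in simp)

lemma commuting_iter_comm_exists:
  assumes "g \<in> carrier G" and "h \<in> carrier G" and "g \<noteq> \<one>" and "g \<noteq> h" and "h \<noteq> \<one>"
    and "iter_comm G h g n = \<one>"
  obtains j where "j < n" and "iter_comm G h g j \<notin> {\<one>, h}"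
    and "h \<otimes> iter_comm G h g j = iter_comm G h g j \<otimes> h"
proof -
  obtain j where "j < n" "iter_comm G h g j \<noteq> \<one>" "iter_comm G h g (Suc j) = \<one>"
    using ex_last_index_before[of "iter_comm G h g" \<one> n] assms(3,6) by auto
  moreover have "iter_comm G h g j \<noteq> h"
    using assms(1,2,5,4) by (rule iter_comm_neq_self)
  moreover have "h \<otimes> iter_comm G h g j = iter_comm G h g j \<otimes> h"
    using assms(1,2) \<open>iter_comm G h g (Suc j) = \<one>\<close> by (rule commute_if_iter_comm_Suc_eq_one)
  ultimately show ?thesis
    using that by blast
qed

lemma iter_comm_walk:
  assumes "T \<subseteq> carrier G" and "\<forall>s\<in>T. inv s \<in> T" and "g \<in> T" and "h \<in> T"
  shows "\<exists>P. is_walk (cay G T) P \<and> hd P = \<one> \<and> last P = iter_comm G h g k \<and> length P < 2 ^ (k + 2)"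
proof (induction k)
  case 0
  have "cay G T \<one> g"
    unfolding cay_def using assms(1,3) by (intro conjI bexI[of _ g]) auto
  then show ?case
    by (intro exI[of _ "[\<one>, g]"]) (simp add: is_walk_def nth_Cons')
next
  case (Suc k)
  then obtain P where P: "is_walk (cay G T) P" "hd P = \<one>" "last P = iter_comm G h g k"
    "length P < 2 ^ (k + 2)"
    by blast
  define d where "d = iter_comm G h g k"
  define a where "a = h \<otimes> inv d"
  define b where "b = a \<otimes> inv h"
  let ?P' = "[\<one>] @ map ((\<otimes>) a) (rev P) @ map ((\<otimes>) b) P"
  have gh: "g \<in> carrier G" "h \<in> carrier G"
    using assms by auto
  have d: "d \<in> carrier G"
    unfolding d_def using gh(2,1) by (rule iter_comm_closed)
  have ab: "a \<in> carrier G" "b \<in> carrier G"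
    unfolding a_def b_def using d gh by auto
  have "P \<noteq> []"
    using P(1) unfolding is_walk_def by blast
  have walk_a: "is_walk (cay G T) (map ((\<otimes>) a) (rev P))"
    using is_walk_rev[OF symp_cay[OF assms(1,2)] P(1)] cay_mult_left[OF assms(1) ab(1)]
    by (rule is_walk_map)
  have walk_b: "is_walk (cay G T) (map ((\<otimes>) b) P)"
    using P(1) cay_mult_left[OF assms(1) ab(2)] by (rule is_walk_map)
  have "cay G T \<one> (a \<otimes> d)"
    unfolding cay_def a_def using d gh assms(4) by (intro conjI bexI[of _ h]) (auto simp: m_assoc)
  moreover have "cay G T (a \<otimes> \<one>) (b \<otimes> \<one>)"
    unfolding cay_def b_def using ab assms(2,4) by (intro conjI bexI[of _ "inv h"]) (auto simp: gh)
  ultimately have "is_walk (cay G T) ?P'"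
    using walk_a walk_b P(2,3) \<open>P \<noteq> []\<close>
    by (intro is_walk_append is_walk_singleton) (simp_all add: hd_map last_map hd_rev last_rev d_def)
  moreover have "last ?P' = iter_comm G h g (Suc k)"
    using P(3) \<open>P \<noteq> []\<close> by (simp add: last_map b_def a_def d_def)
  moreover have "length ?P' < 2 ^ (Suc k + 2)"
    using P(4) by simp
  moreover have "hd ?P' = \<one>"
    by simp
  ultimately show ?case
    by blast
qed

subsection \<open>Local components at an involution pair\<close>

lemma closed_walk_at_append_involution_image:
  assumes "S \<subseteq> carrier G" and "\<forall>s\<in>S. inv s \<in> S" and "h \<in> S" and "h \<otimes> h = \<one>"
    and "is_walk (cay G S) P" and "hd P = \<one>" and "h \<otimes> last P = last P \<otimes> h"
    and "2 * length P \<le> r"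
  shows "closed_walk_at (cay G S) r \<one> (P @ map ((\<otimes>) h) (rev P) @ [\<one>])"
proof -
  have h: "h \<in> carrier G"
    using assms(1,3) by blast
  have "P \<noteq> []"
    using assms(5) unfolding is_walk_def by blast
  then have "last P \<in> carrier G"
    using walk_in_carrier[OF assms(1,5)] assms(6) by auto
  have walk_h: "is_walk (cay G S) (map ((\<otimes>) h) (rev P))"
    using is_walk_rev[OF symp_cay[OF assms(1,2)] assms(5)] cay_mult_left[OF assms(1) h]
    by (rule is_walk_map)
  have "cay G S (last P) (h \<otimes> last P)"
    unfolding cay_def assms(7) using \<open>last P \<in> carrier G\<close> assms(3) by blast
  moreover have "cay G S h \<one>"
    unfolding cay_def using h assms(3,4) by (intro conjI bexI[of _ h]) auto
  ultimately have "is_walk (cay G S) (P @ map ((\<otimes>) h) (rev P) @ [\<one>])"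
    using assms(5,6) walk_h \<open>P \<noteq> []\<close> h
    by (intro is_walk_append is_walk_singleton) (simp_all add: hd_map last_map hd_rev last_rev)
  then show ?thesis
    unfolding closed_walk_at_def using assms(6,8) \<open>P \<noteq> []\<close> by simp
qed

lemma cay_exit_from_involution_pair:
  assumes "g \<in> carrier G" and "h \<in> carrier G" and "h \<otimes> h = \<one>" and "x \<in> {\<one>, h}"
    and "cay G {g, inv g, h} x u" and "u \<notin> {\<one>, h}"
  shows "u \<in> {g, inv g, h \<otimes> g, h \<otimes> inv g}"
proof -
  obtain s where s: "s \<in> {g, inv g, h}" and u: "u = x \<otimes> s"
    using assms(5) unfolding cay_def by blast
  have "x \<otimes> h \<in> {\<one>, h}"
    using assms(2-4) by auto
  then have "s \<in> {g, inv g}"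
    using s u assms(6) by blast
  then show ?thesis
    using u assms(1,2,4) by auto
qed

lemma exit_vertex_same_local_comp:
  assumes "S \<subseteq> carrier G" and "\<forall>s\<in>S. inv s \<in> S" and "g \<in> S" and "h \<in> S" and "h \<otimes> h = \<one>"
    and walk: "is_walk (cay G {g, inv g, h}) P" "hd P = \<one>" "last P \<notin> {\<one>, h}"
    and "h \<otimes> last P = last P \<otimes> h" and "2 * length P \<le> r"
  obtains u where "u \<in> {g, inv g, h \<otimes> g, h \<otimes> inv g}"
    and "same_local_comp (cay G S) r \<one> h u (h \<otimes> u)"
proof -
  let ?E = "cay G S" and ?X = "{\<one>, h}"
  have g: "g \<in> carrier G" and h: "h \<in> carrier G"
    using assms(1,3,4) by blast+
  have T: "{g, inv g, h} \<subseteq> S"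
    using assms(2-4) by blast
  have "is_walk ?E P"
    using walk(1) cay_mono[OF T] by (rule is_walk_mono)
  then have closed: "closed_walk_at ?E r \<one> (P @ map ((\<otimes>) h) (rev P) @ [\<one>])"
    by (rule closed_walk_at_append_involution_image[OF assms(1,2,4,5) _ walk(2) assms(9,10)])
  have "P \<noteq> []"
    using walk(1) unfolding is_walk_def by blast
  moreover have "hd P \<in> ?X"
    using walk(2) by simp
  ultimately obtain P1 P2 where P: "P = P1 @ P2" "P1 \<noteq> []" "last P1 \<in> ?X" "P2 \<noteq> []" "set P2 \<inter> ?X = {}"
    using split_at_last_visit[OF _ _ walk(3)] by blast
  define W where "W = P2 @ map ((\<otimes>) h) (rev P2)"
  define u where "u = hd P2"
  have "set P \<subseteq> carrier G"
    using walk_in_carrier[OF _ walk(1)] T assms(1) walk(2) by (metis one_closed subset_trans)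
  have "h \<otimes> y \<notin> ?X" if "y \<in> set P2" for y
  proof -
    have "y \<in> carrier G" and "y \<notin> ?X"
      using that P(1,5) \<open>set P \<subseteq> carrier G\<close> by auto
    then show ?thesis
      using involution_mult_mem_iff[OF h assms(5) \<open>y \<in> carrier G\<close>] by blast
  qed
  then have W_avoids: "set W \<inter> ?X = {}"
    unfolding W_def set_append set_map set_rev using P(5) by blast
  have "closed_walk_at ?E r \<one> (P1 @ W @ (map ((\<otimes>) h) (rev P1) @ [\<one>]))"
    using closed unfolding W_def P(1) by simp
  moreover have "W \<noteq> []"
    unfolding W_def using P(4) by simp
  ultimately have "conn_in (ball_V ?E r \<one> - ?X) (ball_E ?E r \<one>) (hd W) (last W)"
    using W_avoids by (rule conn_in_ball_if_infix_of_closed_walk)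
  then have conn: "conn_in (ball_V ?E r \<one> - ?X) (ball_E ?E r \<one>) u (h \<otimes> u)"
    using P(4) by (simp add: W_def u_def last_map last_rev)
  have exit: "cay G {g, inv g, h} (last P1) u"
    using walk(1) P(1,2,4) unfolding u_def by (simp add: is_walk_appendD)
  have "u \<notin> ?X"
    using P(4,5) unfolding u_def by (auto dest: hd_in_set)
  then have "u \<in> nbhd ?E ?X"
    unfolding nbhd_def using P(3) cay_mono[OF T exit] by blast
  moreover have "h \<otimes> u \<in> nbhd ?E ?X"
    using nbhd_mult_involution[OF assms(1) h assms(5)] calculation .
  ultimately have "same_local_comp ?E r \<one> h u (h \<otimes> u)"
    by (rule same_local_comp_if_conn_in_ball[OF _ _ _ conn]) simp
  moreover have "u \<in> {g, inv g, h \<otimes> g, h \<otimes> inv g}"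
    using g h assms(5) P(3) exit \<open>u \<notin> ?X\<close> by (rule cay_exit_from_involution_pair)
  ultimately show ?thesis
    using that by blast
qed

lemma same_local_comp_generator_or_inverse:
  assumes "g \<in> carrier G" and "h \<in> carrier G" and "h \<otimes> h = \<one>"
    and u: "u \<in> {g, inv g, h \<otimes> g, h \<otimes> inv g}" and same: "same_local_comp E r \<one> h u (h \<otimes> u)"
  shows "same_local_comp E r \<one> h g (h \<otimes> g) \<or> same_local_comp E r \<one> h (inv g) (h \<otimes> inv g)"
proof (cases "u \<in> {g, inv g}")
  case True
  then show ?thesis
    using same by blast
next
  case False
  then obtain x where x: "x \<in> {g, inv g}" and "u = h \<otimes> x"
    using u by blast
  moreover have "h \<otimes> (h \<otimes> x) = x"
    using x assms(1-3) by (auto simp: m_assoc[symmetric])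
  ultimately show ?thesis
    using same_local_comp_sym[OF same] x by auto
qed

lemma traverses_sym_if_same_local_comp:
  assumes "S \<subseteq> carrier G" and "h \<in> carrier G" and "h \<otimes> h = \<one>" and "g \<in> carrier G"
    and trav: "traverses G S r \<one> h g" and same: "same_local_comp (cay G S) r \<one> h g (h \<otimes> g)"
    and "inv g \<in> nbhd (cay G S) {\<one>, h}"
  shows "traverses_sym G S r h g"
proof -
  let ?same = "same_local_comp (cay G S) r \<one> h"
  have "\<not> ?same (inv g) (h \<otimes> g)"
  proof
    assume "?same (inv g) (h \<otimes> g)"
    then have "?same (inv g) g"
      using same_local_comp_sym[OF same] by (rule same_local_comp_trans)
    moreover have "?same (h \<otimes> inv g) (h \<otimes> g)"
      using same_local_comp_mult_involution[OF assms(1-3) calculation] by (simp add: m_assoc[symmetric] assms(2-4))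
    ultimately show False
      using trav assms(4) unfolding traverses_def distinct_local_comps_def by auto
  qed
  moreover have "h \<otimes> g \<in> nbhd (cay G S) {\<one>, h}"
    using same unfolding same_local_comp_def by blast
  ultimately show ?thesis
    unfolding traverses_sym_def distinct_local_comps_def using trav assms(7) by blast
qed

lemma traverses_sym_if_traverses_antisym:
  assumes "nilpotent_class_le G n" and "S \<subseteq> carrier G - {\<one>}" and "\<forall>s\<in>S. inv s \<in> S"
    and "r \<ge> 2 ^ (n + 2)" and "h \<in> S" and "h \<otimes> h = \<one>"
    and "g \<in> S" and "traverses_antisym G S r h g"
  shows "traverses_sym G S r h g"
proof -
  have trav: "traverses G S r \<one> h g"
    and antisym: "distinct_local_comps (cay G S) r \<one> h (inv g) (h \<otimes> inv g)"
    using assms(8) unfolding traverses_antisym_def by auto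
  have S: "S \<subseteq> carrier G" and g: "g \<in> carrier G" and h: "h \<in> carrier G" and "h \<noteq> \<one>"
    using assms(2,5,7) by auto
  have "inv h = h"
    using assms(6) h h by (rule inv_equality)
  have inv_g: "inv g \<in> nbhd (cay G S) {\<one>, h}"
    using antisym unfolding distinct_local_comps_def by blast
  then have "inv g \<notin> {\<one>, h}"
    unfolding nbhd_def by blast
  then have "g \<noteq> \<one>" and "g \<noteq> h" and "h \<noteq> inv g"
    using g \<open>inv h = h\<close> by auto
  then have "iter_comm G h g n = \<one>"
    using assms(1) g h unfolding nilpotent_class_le_def by auto
  then obtain j where "j < n" and d: "iter_comm G h g j \<notin> {\<one>, h}"
    and commute: "h \<otimes> iter_comm G h g j = iter_comm G h g j \<otimes> h"
    using commuting_iter_comm_exists g h \<open>g \<noteq> \<one>\<close> \<open>g \<noteq> h\<close> \<open>h \<noteq> \<one>\<close> by blast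
  obtain P where P: "is_walk (cay G {g, inv g, h}) P" "hd P = \<one>" "last P = iter_comm G h g j"
    and "length P < 2 ^ (j + 2)"
    using iter_comm_walk[of "{g, inv g, h}" g h j] g h \<open>inv h = h\<close> by auto
  then have "2 * length P < 2 ^ (j + 3)"
    by (simp add: power_add)
  also have "\<dots> \<le> 2 ^ (n + 2)"
    using \<open>j < n\<close> by (intro power_increasing) auto
  finally have "2 * length P \<le> r"
    using assms(4) by simp
  then obtain u where "u \<in> {g, inv g, h \<otimes> g, h \<otimes> inv g}"
    and "same_local_comp (cay G S) r \<one> h u (h \<otimes> u)"
    using exit_vertex_same_local_comp[OF S assms(3,7,5,6) P(1,2)] d commute unfolding P(3) by blast
  then have "same_local_comp (cay G S) r \<one> h g (h \<otimes> g)"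
    using same_local_comp_generator_or_inverse[OF g h assms(6)] antisym
    unfolding distinct_local_comps_def by blast
  then show ?thesis
    by (rule traverses_sym_if_same_local_comp[OF S h assms(6) g trav _ inv_g])
qed

end

theorem proposition8p6:
  fixes G :: "('a, 'b) monoid_scheme" and S :: "'a set" and n r :: nat and h :: 'a
  assumes "group G"
    and "nilpotent_class_le G n"
    and "S \<subseteq> carrier G - {\<one>\<^bsub>G\<^esub>}"
    and "\<forall>s\<in>S. inv\<^bsub>G\<^esub> s \<in> S"
    and "generate G S = carrier G"
    and "r \<ge> max (2 ^ (n + 2)) 10"
    and "h \<in> S" and "h \<otimes>\<^bsub>G\<^esub> h = \<one>\<^bsub>G\<^esub>"
    and "local_2_separator (cay G S) r \<one>\<^bsub>G\<^esub> h"
    and "\<forall>v\<in>carrier G. \<not> local_cutvertex (cay G S) r v"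
  shows "\<forall>g\<in>S. traverses_antisym G S r h g \<longrightarrow> traverses_sym G S r h g"
  using group.traverses_sym_if_traverses_antisym[OF assms(1,2,3,4) _ assms(7,8)] assms(6) by simp

end
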